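(* Let $\vec X^m\in\underline V^h_{\partial_0}$ satisfy assumption $(\mathfrak A)$, assume $\vec\omega^m(q_j)\neq\vec0$ for all nodes $q_j\in\overline I\setminus\partial_0I$, and let $\Delta t_m>0$. Then there exists a unique pair $(\delta\vec X^{m+1},\vec\kappa^{m+1})\in\underline V^h_\partial\times\underline V^h$ such that, with $\vec X^{m+1}=\vec X^m+\delta\vec X^{m+1}$, $$\Big(\tfrac{\vec X^{m+1}-\vec X^m}{\Delta t_m},\vec\chi\,|\vec X^m_\rho|\Big)^h=\Big(\vec\kappa^{m+1}-\vec{\mathfrak K}^m(\vec\kappa^{m+1}),\vec\chi\,|\vec X^m_\rho|\Big)^h\quad\forall\,\vec\chi\in\underline V^h,$$ $$\Big(\vec\kappa^{m+1},\vec\eta\,|\vec X^m_\rho|\Big)^h+\Big(\vec X^{m+1}_\rho,\vec\eta_\rho|\vec X^m_\rho|^{-1}\Big)=-\sum_{i=1}^2\sum_{p\in\partial_iI}\widehat\varrho^{(p)}\,\vec\eta(p)\cdot\vec e_{3-i}\quad\forall\,\vec\eta\in\underline V^h_\partial .$$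
   Context: Setup. $\vec e_1=(1,0)^T$, $\vec e_2=(0,1)^T$; "$\cdot$" is the Euclidean inner product. $I$ is either the periodic interval $\mathbb R/\mathbb Z$ (with $\partial I=\emptyset$) or $I=(0,1)$ (with $\partial I=\{0,1\}$). $\partial I=\partial_DI\cup\partial_0I\cup\partial_1I\cup\partial_2I$ is a given disjoint partition, and $\widehat\varrho^{(p)}\in\mathbb R$, $p\in\{0,1\}$, are given constants with $|\widehat\varrho^{(p)}|\le1$. Let $J\ge3$, $h=1/J$, $q_j=jh$ ($j=0,\dots,J$; $q_0=q_J$ identified in the periodic case). $V^h$ is the space of continuous functions on $\overline I$ (periodic if $I=\mathbb R/\mathbb Z$) that are affine on each $[q_{j-1},q_j]$; $\underline V^h=[V^h]^2$; $\underline V^h_{\partial_0}=\{\vec\eta\in\underline V^h:\vec\eta(\rho)\cdot\vec e_1=0\ \forall\rho\in\partial_0I\}$; $\underline V^h_\partial=\{\vec\eta\in\underline V^h_{\partial_0}:\vec\eta(\rho)\cdot\vec e_i=0\ \forall\rho\in\partial_iI,\ i=1,2;\ \vec\eta(\rho)=\vec0\ \forall\rho\in\partial_DI\}$. $(\cdot,\cdot)$ is the $L^2(I)$ inner product (with dot product for vector functions), and for piecewise continuous $f,g$ the mass-lumped product is $(f,g)^h=\tfrac h2\sum_{j=1}^J[(fg)(q_j^-)+(fg)(q_{j-1}^+)]$. For $\vec X^m\in\underline V^h_{\partial_0}$ with $|\vec X^m_\rho|>0$ a.e., set $\vec\nu^m=-[\vec X^m_\rho]^\perp/|\vec X^m_\rho|$,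 where $(a,b)^\perp=(b,-a)$, and let $\vec\omega^m\in\underline V^h$ be defined by $(\vec\omega^m,\vec\varphi|\vec X^m_\rho|)^h=(\vec\nu^m,\vec\varphi|\vec X^m_\rho|)$ for all $\vec\varphi\in\underline V^h$. Assumption $(\mathfrak A)$: $|\vec X^m_\rho|>0$ a.e. on $I$ and $\vec X^m(\rho)\cdot\vec e_1>0$ for all $\rho\in\overline I\setminus\partial_0I$. For $\vec\kappa\in\underline V^h$, $\vec{\mathfrak K}^m(\vec\kappa)\in\underline V^h$ is defined nodally by $\vec{\mathfrak K}^m(\vec\kappa)(q_j)=\frac{\vec\omega^m(q_j)\cdot\vec e_1}{\vec X^m(q_j)\cdot\vec e_1}\,\frac{\vec\omega^m(q_j)}{|\vec\omega^m(q_j)|^2}$ if $q_j\in\overline I\setminus\partial_0I$ and $\vec{\mathfrak K}^m(\vec\kappa)(q_j)=-\vec\kappa(q_j)$ if $q_j\in\partial_0I$. *)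

theory Defs
  imports "HOL-Analysis.Analysis"
begin

(* A function in V^h (resp. [V^h]^2) is represented by its nodal values
   X j = X(q_j), j = 0..J, with X j = 0 for j > J (canonical representative);
   in the periodic case q_J is identified with q_0, i.e. X J = X 0.
   Vectors in R^2 are real \<times> real, with the Euclidean inner product (\<bullet>). *)

type_synonym vfun = "nat \<Rightarrow> real \<times> real"

definition hh :: "nat \<Rightarrow> real" where
  "hh J = 1 / real J"

definition node :: "nat \<Rightarrow> nat \<Rightarrow> real" where
  "node J j = real j / real J"

definition bdry :: "bool \<Rightarrow> real set" where
  "bdry per = (if per then {} else {0, 1})"

definition Vh :: "bool \<Rightarrow> nat \<Rightarrow> vfun set" where
  "Vh per J = {X. (\<forall>j>J. X j = 0) \<and> (per \<longrightarrow> X J = X 0)}"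

definition interp :: "nat \<Rightarrow> vfun \<Rightarrow> real \<Rightarrow> real \<times> real" where
  "interp J X r = (let k = nat \<lfloor>r * real J\<rfloor> in
     if k \<ge> J then X J
     else (real k + 1 - r * real J) *\<^sub>R X k + (r * real J - real k) *\<^sub>R X (Suc k))"

definition Vh_d0 :: "bool \<Rightarrow> nat \<Rightarrow> real set \<Rightarrow> vfun set" where
  "Vh_d0 per J P0 = {X \<in> Vh per J. \<forall>r\<in>P0. fst (interp J X r) = 0}"

definition Vh_d :: "bool \<Rightarrow> nat \<Rightarrow> real set \<Rightarrow> real set \<Rightarrow> real set \<Rightarrow> real set \<Rightarrow> vfun set" where
  "Vh_d per J D P0 P1 P2 = {X \<in> Vh_d0 per J P0.
      (\<forall>r\<in>P1. fst (interp J X r) = 0) \<and> (\<forall>r\<in>P2. snd (interp J X r) = 0)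
      \<and> (\<forall>r\<in>D. interp J X r = 0)}"

(* the (constant) derivative X_rho on the element [q_{j-1}, q_j], j = 1..J *)
definition drho :: "nat \<Rightarrow> vfun \<Rightarrow> nat \<Rightarrow> real \<times> real" where
  "drho J X j = real J *\<^sub>R (X j - X (j - 1))"

definition perp :: "real \<times> real \<Rightarrow> real \<times> real" where
  "perp v = (snd v, - fst v)"

(* mass lumped product (f,g)^h = h/2 \<Sum>_{j=1}^J [(fg)(q_j^-) + (fg)(q_{j-1}^+)],
   given fm j = (fg)(q_j^-) and fp j = (fg)(q_j^+) *)
definition lumped :: "nat \<Rightarrow> (nat \<Rightarrow> real) \<Rightarrow> (nat \<Rightarrow> real) \<Rightarrow> real" where
  "lumped J fm fp = hh J / 2 * (\<Sum>j=1..J. fm j + fp (j - 1))"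

definition mass :: "nat \<Rightarrow> vfun \<Rightarrow> vfun \<Rightarrow> vfun \<Rightarrow> real" where
  "mass J W a b = lumped J (\<lambda>j. (a j \<bullet> b j) * norm (drho J W j))
                            (\<lambda>j. (a j \<bullet> b j) * norm (drho J W (Suc j)))"

(* L2 product of elementwise constant vector functions (values f j on element j) *)
definition l2pc :: "nat \<Rightarrow> (nat \<Rightarrow> real \<times> real) \<Rightarrow> (nat \<Rightarrow> real \<times> real) \<Rightarrow> real" where
  "l2pc J f g = (\<Sum>j=1..J. hh J * (f j \<bullet> g j))"

definition nu :: "nat \<Rightarrow> vfun \<Rightarrow> nat \<Rightarrow> real \<times> real" where
  "nu J W j = - ((1 / norm (drho J W j)) *\<^sub>R perp (drho J W j))"

(* omega in [V^h]^2 with (omega, phi |W_rho|)^h = (nu, phi |W_rho|) for all phi;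
   the right-hand side is the exact integral, phi being affine on each element *)
definition omega :: "bool \<Rightarrow> nat \<Rightarrow> vfun \<Rightarrow> vfun" where
  "omega per J W = (THE w. w \<in> Vh per J \<and>
     (\<forall>\<phi>\<in>Vh per J. mass J W w \<phi> =
        (\<Sum>j=1..J. hh J * norm (drho J W j) * (nu J W j \<bullet> ((1/2) *\<^sub>R (\<phi> (j - 1) + \<phi> j))))))"

definition assmA :: "nat \<Rightarrow> real set \<Rightarrow> vfun \<Rightarrow> bool" where
  "assmA J P0 W = ((\<forall>j\<in>{1..J}. drho J W j \<noteq> 0) \<and>
                   (\<forall>r\<in>{0..1} - P0. fst (interp J W r) > 0))"

definition Kfrak :: "bool \<Rightarrow> nat \<Rightarrow> real set \<Rightarrow> vfun \<Rightarrow> vfun \<Rightarrow> vfun" where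
  "Kfrak per J P0 W \<kappa> j =
     (if j > J then 0
      else if node J j \<in> P0 then - \<kappa> j
      else (fst (omega per J W j) / fst (W j)) *\<^sub>R
             ((1 / (norm (omega per J W j))\<^sup>2) *\<^sub>R omega per J W j))"

end

theory Submission
  imports Defs "HOL-Library.Function_Algebras"
begin

(* Since the curvature-independent part of Kfrak can be moved to the load, the scheme is a square
   linear system for (dX, kappa) on the finite-dimensional space V_partial x V, so it is uniquely
   solvable as soon as the homogeneous system has only the trivial solution.  For the latter, test
   the first equation with its own residual: the lumped mass product is positive definite on nodal
   values because |X_rho| > 0, so dX = dt (kappa - Kfrak_lin kappa) at every node, i.e. dX is a
   positive nodal multiple of kappa.  Testing the second equation with dX then yields the sum of
   (kappa, dX |X_rho|)^h >= 0 and (dX_rho, dX_rho / |X_rho|) >= 0, which forces kappa = dX = 0. *)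

instantiation "fun" :: (type, real_vector) real_vector
begin

definition scaleR_fun :: "real \<Rightarrow> ('a \<Rightarrow> 'b) \<Rightarrow> 'a \<Rightarrow> 'b"
  where "scaleR_fun c f = (\<lambda>x. c *\<^sub>R f x)"

instance
  by standard (simp_all add: scaleR_fun_def fun_eq_iff scaleR_add_right scaleR_add_left)

end

lemma scaleR_fun_apply [simp]: "(c *\<^sub>R f) x = c *\<^sub>R f x"
  by (simp add: scaleR_fun_def)

lemma sum_apply: "(\<Sum>x\<in>A. f x) i = (\<Sum>x\<in>A. f x i)"
  by (induction A rule: infinite_finite_induct) auto

lemma finite_basis_exists:
  assumes "subspace S" and "finite T" and "S \<subseteq> span T"
  obtains B where "finite B" and "independent B" and "span B = S"
proof -
  obtain B where B: "B \<subseteq> S" "independent B" "S \<subseteq> span B"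
    using basis_exists[of S] by metis
  show thesis
  proof
    show "finite B"
      using independent_span_bound[OF \<open>finite T\<close> B(2)] B(1) assms(3) by blast
    show "span B = S"
      using span_subspace[OF B(1) B(3) assms(1)] .
  qed (fact B(2))
qed

lemma independent_sum_scaleR_eq_iff:
  assumes "finite B" and "independent B"
  shows "(\<Sum>b\<in>B. u b *\<^sub>R b) = (\<Sum>b\<in>B. v b *\<^sub>R b) \<longleftrightarrow> (\<forall>b\<in>B. u b = v b)"
proof
  assume "(\<Sum>b\<in>B. u b *\<^sub>R b) = (\<Sum>b\<in>B. v b *\<^sub>R b)"
  then have "(\<Sum>b\<in>B. (u b - v b) *\<^sub>R b) = 0"
    by (simp add: scaleR_diff_left sum_subtractf)
  show "\<forall>b\<in>B. u b = v b"
  proof (rule ccontr)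
    assume "\<not> (\<forall>b\<in>B. u b = v b)"
    then obtain b where "b \<in> B" "u b - v b \<noteq> 0"
      by auto
    with \<open>(\<Sum>b\<in>B. (u b - v b) *\<^sub>R b) = 0\<close> have "dependent B"
      unfolding dependent_finite[OF \<open>finite B\<close>] by (intro exI[of _ "\<lambda>b. u b - v b"]) auto
    with \<open>independent B\<close> show False
      by simp
  qed
next
  assume "\<forall>b\<in>B. u b = v b"
  then show "(\<Sum>b\<in>B. u b *\<^sub>R b) = (\<Sum>b\<in>B. v b *\<^sub>R b)"
    by (intro sum.cong) simp_all
qed

lemma linear_inj_on_imp_surj_on:
  fixes f :: "'a::real_vector \<Rightarrow> 'a"
  assumes f: "linear f" and S: "subspace S" "finite T" "S \<subseteq> span T"
    and into: "f ` S \<subseteq> S" and inj: "inj_on f S"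
  shows "f ` S = S"
proof -
  obtain B where B: "finite B" "independent B" "span B = S"
    using finite_basis_exists[OF S] .
  have "B \<subseteq> S"
    using span_superset B(3) by blast
  have indep_fB: "independent (f ` B)"
    using linear_independent_injective_image[OF f B(2)] inj B(3) by simp
  have card_fB: "card (f ` B) = card B"
    using card_image inj_on_subset[OF inj \<open>B \<subseteq> S\<close>] by blast
  have "S \<subseteq> span (f ` B)"
  proof
    fix a assume "a \<in> S"
    show "a \<in> span (f ` B)"
    proof (rule ccontr)
      assume a: "a \<notin> span (f ` B)"
      then have "a \<notin> f ` B"
        using span_superset[of "f ` B"] by blast
      have "independent (insert a (f ` B))"
        using indep_fB a by (simp add: independent_insert)
      moreover have "insert a (f ` B) \<subseteq> span B"
        using \<open>a \<in> S\<close> \<open>B \<subseteq> S\<close> into B(3) by auto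
      ultimately have "card (insert a (f ` B)) \<le> card B"
        using independent_span_bound[OF B(1)] by blast
      with \<open>a \<notin> f ` B\<close> card_fB B(1) show False
        by simp
    qed
  qed
  then have "S \<subseteq> f ` S"
    using B(3) by (simp add: linear_span_image[OF f])
  with into show ?thesis
    by (rule subset_antisym)
qed

lemma bilinear_ex1_solution:
  fixes A :: "'a::real_vector \<Rightarrow> 'a \<Rightarrow> real"
  assumes A: "bilinear A" and F: "linear F"
    and S: "subspace S" "finite T" "S \<subseteq> span T"
    and nondegenerate: "\<And>z. z \<in> S \<Longrightarrow> \<forall>w\<in>S. A z w = 0 \<Longrightarrow> z = 0"
  shows "\<exists>!z. z \<in> S \<and> (\<forall>w\<in>S. A z w = F w)"
proof -
  obtain B where B: "finite B" "independent B" "span B = S"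
    using finite_basis_exists[OF S] .
  (* Testing against S amounts to comparing B-coordinates, so the problem reads
     \<Phi> z = const for an injective, hence bijective, endomorphism \<Phi> of S. *)
  define \<Phi> where "\<Phi> z = (\<Sum>b\<in>B. A z b *\<^sub>R b)" for z
  have tested_iff: "(\<forall>w\<in>S. A z w = G w) \<longleftrightarrow> \<Phi> z = (\<Sum>b\<in>B. G b *\<^sub>R b)"
    if "linear G" for z G
  proof -
    have "linear (A z)"
      using A by (simp add: bilinear_def)
    then have "(\<forall>w\<in>S. A z w = G w) \<longleftrightarrow> (\<forall>b\<in>B. A z b = G b)"
      using linear_eq_on_span[of "A z" G B] that B(3) span_superset[of B] by blast
    then show ?thesis
      by (simp add: \<Phi>_def independent_sum_scaleR_eq_iff[OF B(1,2)])
  qed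
  have "linear \<Phi>"
    by (rule linearI) (simp_all add: \<Phi>_def bilinear_ladd[OF A] bilinear_lmul[OF A]
        scaleR_add_left sum.distrib scaleR_sum_right)
  have in_S: "(\<Sum>b\<in>B. c b *\<^sub>R b) \<in> S" for c
    unfolding B(3)[symmetric] by (intro span_sum span_scale span_base)
  have "inj_on \<Phi> S"
  proof (rule linear_inj_on_iff_eq_0[OF \<open>linear \<Phi>\<close> S(1), THEN iffD2], intro ballI impI)
    fix z assume "z \<in> S" "\<Phi> z = 0"
    then have "\<forall>w\<in>S. A z w = 0"
      using tested_iff[of "\<lambda>_. 0" z] linear_zero by simp
    then show "z = 0"
      using nondegenerate \<open>z \<in> S\<close> by blast
  qed
  moreover have "\<Phi> ` S \<subseteq> S"
    using in_S by (auto simp: \<Phi>_def)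
  ultimately have "\<Phi> ` S = S"
    using linear_inj_on_imp_surj_on[OF \<open>linear \<Phi>\<close> S] by simp
  then obtain z where z: "z \<in> S" "\<Phi> z = (\<Sum>b\<in>B. F b *\<^sub>R b)"
    using in_S by (metis imageE)
  show ?thesis
  proof (rule ex1I[of _ z])
    show "z \<in> S \<and> (\<forall>w\<in>S. A z w = F w)"
      using z tested_iff[OF F] by simp
  next
    fix z' assume z': "z' \<in> S \<and> (\<forall>w\<in>S. A z' w = F w)"
    then have "\<Phi> z' = \<Phi> z"
      using z tested_iff[OF F] by simp
    then show "z' = z"
      using inj_onD[OF \<open>inj_on \<Phi> S\<close>] z' z(1) by blast
  qed
qed

lemma linear_eq_on_Times_iff:
  assumes f: "linear f" and g: "linear g" and "subspace A" "subspace B"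
  shows "(\<forall>w\<in>A \<times> B. f w = g w) \<longleftrightarrow> (\<forall>x\<in>A. f (x, 0) = g (x, 0)) \<and> (\<forall>y\<in>B. f (0, y) = g (0, y))"
proof
  assume "\<forall>w\<in>A \<times> B. f w = g w"
  then show "(\<forall>x\<in>A. f (x, 0) = g (x, 0)) \<and> (\<forall>y\<in>B. f (0, y) = g (0, y))"
    using subspace_0[OF \<open>subspace A\<close>] subspace_0[OF \<open>subspace B\<close>] by blast
next
  assume on_axes: "(\<forall>x\<in>A. f (x, 0) = g (x, 0)) \<and> (\<forall>y\<in>B. f (0, y) = g (0, y))"
  show "\<forall>w\<in>A \<times> B. f w = g w"
  proof clarify
    fix x y assume "x \<in> A" "y \<in> B"
    have "(x, y) = (x, 0) + (0, y)"
      by simp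
    then show "f (x, y) = g (x, y)"
      using linear_add[OF f, of "(x, 0)" "(0, y)"] linear_add[OF g, of "(x, 0)" "(0, y)"]
        on_axes \<open>x \<in> A\<close> \<open>y \<in> B\<close> by simp
  qed
qed

lemma Times_subset_span:
  assumes "A \<subseteq> span T" "B \<subseteq> span U"
  shows "A \<times> B \<subseteq> span (T \<times> {0} \<union> {0} \<times> U)"
proof clarify
  fix a b assume "a \<in> A" "b \<in> B"
  have "(a, 0) \<in> span (T \<times> {0})"
    using \<open>a \<in> A\<close> assms(1) by (auto simp: span_Times_sing2)
  moreover have "(0, b) \<in> span ({0} \<times> U)"
    using \<open>b \<in> B\<close> assms(2) by (auto simp: span_Times_sing1)
  moreover have "span (T \<times> {0}) \<subseteq> span (T \<times> {0} \<union> {0} \<times> U)"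
    and "span ({0} \<times> U) \<subseteq> span (T \<times> {0} \<union> {0} \<times> U)"
    by (simp_all add: span_mono)
  ultimately have "(a, 0) + (0, b) \<in> span (T \<times> {0} \<union> {0} \<times> U)"
    by (intro span_add) blast+
  then show "(a, b) \<in> span (T \<times> {0} \<union> {0} \<times> U)"
    by simp
qed

lemma linear_drho: "linear (drho J)"
  by (rule linearI) (simp_all add: drho_def fun_eq_iff algebra_simps)

lemma interp_add: "interp J (X + Y) r = interp J X r + interp J Y r"
  by (simp add: interp_def Let_def algebra_simps)

lemma interp_scaleR: "interp J (c *\<^sub>R X) r = c *\<^sub>R interp J X r"
  by (simp add: interp_def Let_def algebra_simps)

lemma interp_0: "interp J 0 r = 0"
  by (simp add: interp_def Let_def)

lemma mass_eq_sum:
  "mass J W a b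
     = (\<Sum>j=1..J. hh J / 2 * norm (drho J W j) * (a j \<bullet> b j + a (j - 1) \<bullet> b (j - 1)))"
  unfolding mass_def lumped_def sum_distrib_left
  by (intro sum.cong) (auto simp: algebra_simps)

lemma bilinear_mass: "bilinear (mass J W)"
  unfolding bilinear_def
  by (auto intro!: linearI simp: mass_def lumped_def inner_add_left inner_add_right
      add_divide_distrib sum.distrib sum_distrib_left algebra_simps)

lemma bilinear_l2pc: "bilinear (l2pc J)"
  unfolding bilinear_def
  by (auto intro!: linearI simp: l2pc_def inner_add_left inner_add_right
      sum.distrib sum_distrib_left algebra_simps)

lemma mass_nonneg:
  assumes "\<forall>j\<le>J. 0 \<le> a j \<bullet> b j"
  shows "0 \<le> mass J W a b"
  unfolding mass_eq_sum hh_def using assms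
  by (intro sum_nonneg mult_nonneg_nonneg add_nonneg_nonneg) auto

lemma mass_eq_0_iff:
  assumes "J > 0" and "\<forall>j\<in>{1..J}. drho J W j \<noteq> 0" and "\<forall>j\<le>J. 0 \<le> a j \<bullet> b j"
  shows "mass J W a b = 0 \<longleftrightarrow> (\<forall>j\<le>J. a j \<bullet> b j = 0)"
proof
  define t where "t j = hh J / 2 * norm (drho J W j) * (a j \<bullet> b j + a (j - 1) \<bullet> b (j - 1))" for j
  assume "mass J W a b = 0"
  then have "sum t {1..J} = 0"
    by (simp add: mass_eq_sum t_def)
  moreover have "\<forall>j\<in>{1..J}. 0 \<le> t j"
    using assms(3) by (auto simp: t_def hh_def intro!: mult_nonneg_nonneg add_nonneg_nonneg)
  ultimately have t_0: "t j = 0" if "j \<in> {1..J}" for j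
    using that sum_nonneg_eq_0_iff[of "{1..J}" t] by simp
  have both: "a j \<bullet> b j = 0 \<and> a (j - 1) \<bullet> b (j - 1) = 0" if "j \<in> {1..J}" for j
  proof -
    have "hh J / 2 * norm (drho J W j) \<noteq> 0"
      using that assms(1,2) by (simp add: hh_def)
    then have "a j \<bullet> b j + a (j - 1) \<bullet> b (j - 1) = 0"
      using t_0[OF that] by (simp add: t_def)
    moreover have "0 \<le> a j \<bullet> b j" "0 \<le> a (j - 1) \<bullet> b (j - 1)"
      using that assms(3) by auto
    ultimately show ?thesis
      by linarith
  qed
  show "\<forall>j\<le>J. a j \<bullet> b j = 0"
  proof (intro allI impI)
    fix j assume "j \<le> J"
    then show "a j \<bullet> b j = 0"
      using both[of j] both[of 1] \<open>J > 0\<close> by (cases "j = 0") auto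
  qed
qed (auto simp: mass_eq_sum intro!: sum.neutral)

lemma subspace_Vh: "subspace (Vh per J)"
  by (auto simp: subspace_def Vh_def)

lemma subspace_Vh_d: "subspace (Vh_d per J D P0 P1 P2)"
  by (auto simp: subspace_def Vh_d_def Vh_d0_def Vh_def interp_add interp_scaleR interp_0)

definition nodal_basis :: "nat \<Rightarrow> (nat \<Rightarrow> 'a::euclidean_space) set" where
  "nodal_basis J = (\<lambda>(j, b) i. if i = j then b else 0) ` ({..J} \<times> Basis)"

lemma finite_nodal_basis: "finite (nodal_basis J)"
  by (simp add: nodal_basis_def)

lemma finite_support_in_span_nodal_basis:
  fixes X :: "nat \<Rightarrow> 'a::euclidean_space"
  assumes "\<forall>j>J. X j = 0"
  shows "X \<in> span (nodal_basis J)"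
proof -
  have "X = (\<Sum>j\<le>J. \<Sum>b\<in>Basis. (X j \<bullet> b) *\<^sub>R (\<lambda>i. if i = j then b else 0))"
  proof
    fix i
    have "(\<Sum>b\<in>Basis. (X j \<bullet> b) *\<^sub>R (if i = j then b else 0)) = (if i = j then X j else 0)" for j
      by (simp add: euclidean_representation)
    then have "(\<Sum>j\<le>J. \<Sum>b\<in>Basis. (X j \<bullet> b) *\<^sub>R (\<lambda>i. if i = j then b else 0)) i
        = (\<Sum>j\<le>J. if i = j then X j else 0)"
      by (simp add: sum_apply)
    then show "X i = (\<Sum>j\<le>J. \<Sum>b\<in>Basis. (X j \<bullet> b) *\<^sub>R (\<lambda>i. if i = j then b else 0)) i"
      using assms by (cases "i \<le> J") auto
  qed
  also have "\<dots> \<in> span (nodal_basis J)"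
    unfolding nodal_basis_def by (intro span_sum span_scale span_base) auto
  finally show ?thesis .
qed

definition ds :: "nat \<Rightarrow> vfun \<Rightarrow> vfun \<Rightarrow> vfun" where
  "ds J W \<eta> = (\<lambda>j. (1 / norm (drho J W j)) *\<^sub>R drho J \<eta> j)"

lemma linear_ds: "linear (ds J W)"
  by (rule linearI) (simp_all add: ds_def drho_def fun_eq_iff algebra_simps)

lemma l2pc_drho_ds_nonneg: "0 \<le> l2pc J (drho J X) (ds J W X)"
  unfolding l2pc_def ds_def hh_def by (intro sum_nonneg mult_nonneg_nonneg) auto

definition Kfrak_lin :: "nat \<Rightarrow> real set \<Rightarrow> vfun \<Rightarrow> vfun" where
  "Kfrak_lin J P0 \<kappa> j = (if j \<le> J \<and> node J j \<in> P0 then - \<kappa> j else 0)"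

lemma Kfrak_eq_Kfrak_lin_plus: "Kfrak per J P0 W \<kappa> = Kfrak_lin J P0 \<kappa> + Kfrak per J P0 W 0"
  by (simp add: fun_eq_iff Kfrak_def Kfrak_lin_def)

definition kinematic_residual :: "nat \<Rightarrow> real set \<Rightarrow> real \<Rightarrow> vfun \<times> vfun \<Rightarrow> vfun" where
  "kinematic_residual J P0 dt z = (1 / dt) *\<^sub>R fst z - snd z + Kfrak_lin J P0 (snd z)"

lemma linear_kinematic_residual: "linear (kinematic_residual J P0 dt)"
  by (rule linearI) (simp_all add: kinematic_residual_def Kfrak_lin_def fun_eq_iff algebra_simps)

definition scheme_form :: "nat \<Rightarrow> real set \<Rightarrow> vfun \<Rightarrow> real \<Rightarrow> vfun \<times> vfun \<Rightarrow> vfun \<times> vfun \<Rightarrow> real" where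
  "scheme_form J P0 W dt z w =
     mass J W (kinematic_residual J P0 dt z) (snd w) + mass J W (snd z) (fst w)
     + l2pc J (drho J (fst z)) (ds J W (fst w))"

definition scheme_load :: "bool \<Rightarrow> nat \<Rightarrow> real set \<Rightarrow> real set \<Rightarrow> real set \<Rightarrow> (real \<Rightarrow> real)
    \<Rightarrow> vfun \<Rightarrow> vfun \<times> vfun \<Rightarrow> real" where
  "scheme_load per J P0 P1 P2 rho_hat W w =
     - ((\<Sum>p\<in>P1. rho_hat p * (interp J (fst w) p \<bullet> (0, 1)))
        + (\<Sum>p\<in>P2. rho_hat p * (interp J (fst w) p \<bullet> (1, 0))))
     - l2pc J (drho J W) (ds J W (fst w)) - mass J W (Kfrak per J P0 W 0) (snd w)"

lemma bilinear_scheme_form: "bilinear (scheme_form J P0 W dt)"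
  unfolding bilinear_def
proof (intro allI conjI linearI)
  fix z w v :: "vfun \<times> vfun" and c :: real
  show "scheme_form J P0 W dt z (w + v) = scheme_form J P0 W dt z w + scheme_form J P0 W dt z v"
    by (simp add: scheme_form_def linear_add[OF linear_ds]
      bilinear_radd[OF bilinear_mass] bilinear_radd[OF bilinear_l2pc])
  show "scheme_form J P0 W dt z (c *\<^sub>R w) = c *\<^sub>R scheme_form J P0 W dt z w"
    by (simp add: scheme_form_def linear_scale[OF linear_ds] distrib_left
      bilinear_rmul[OF bilinear_mass] bilinear_rmul[OF bilinear_l2pc])
  show "scheme_form J P0 W dt (w + v) z = scheme_form J P0 W dt w z + scheme_form J P0 W dt v z"
    by (simp add: scheme_form_def linear_add[OF linear_kinematic_residual] linear_add[OF linear_drho]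
      bilinear_ladd[OF bilinear_mass] bilinear_ladd[OF bilinear_l2pc])
  show "scheme_form J P0 W dt (c *\<^sub>R w) z = c *\<^sub>R scheme_form J P0 W dt w z"
    by (simp add: scheme_form_def linear_scale[OF linear_kinematic_residual] linear_scale[OF linear_drho]
      distrib_left bilinear_lmul[OF bilinear_mass] bilinear_lmul[OF bilinear_l2pc])
qed

lemma linear_scheme_load: "linear (scheme_load per J P0 P1 P2 rho_hat W)"
  by (rule linearI) (simp_all add: scheme_load_def interp_add interp_scaleR inner_add_left
      sum.distrib sum_distrib_left algebra_simps
      linear_add[OF linear_ds] linear_scale[OF linear_ds]
      bilinear_radd[OF bilinear_mass] bilinear_rmul[OF bilinear_mass]
      bilinear_radd[OF bilinear_l2pc] bilinear_rmul[OF bilinear_l2pc])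

lemma scheme_space_subset_span:
  "Vh_d per J D P0 P1 P2 \<times> Vh per J \<subseteq> span (nodal_basis J \<times> {0} \<union> {0} \<times> nodal_basis J)"
proof (rule Times_subset_span)
  show "Vh per J \<subseteq> span (nodal_basis J)"
    by (auto simp: Vh_def intro: finite_support_in_span_nodal_basis)
  then show "Vh_d per J D P0 P1 P2 \<subseteq> span (nodal_basis J)"
    by (auto simp: Vh_d_def Vh_d0_def)
qed

lemma kinematic_residual_in_Vh:
  assumes "per \<longrightarrow> P0 = {}" and "dX \<in> Vh per J" and "\<kappa> \<in> Vh per J"
  shows "kinematic_residual J P0 dt (dX, \<kappa>) \<in> Vh per J"
  using assms by (auto simp: Vh_def kinematic_residual_def Kfrak_lin_def)

lemma kinematic_residual_eq_0_iff:
  assumes "dt \<noteq> 0" and "j \<le> J"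
  shows "kinematic_residual J P0 dt (dX, \<kappa>) j = 0
    \<longleftrightarrow> dX j = (if node J j \<in> P0 then 2 * dt else dt) *\<^sub>R \<kappa> j"
proof -
  have divide_iff: "(1 / dt) *\<^sub>R x = y \<longleftrightarrow> x = dt *\<^sub>R y" for x y :: "real \<times> real"
    using \<open>dt \<noteq> 0\<close> by auto
  show ?thesis
  proof (cases "node J j \<in> P0")
    case True
    then have "kinematic_residual J P0 dt (dX, \<kappa>) j = 0 \<longleftrightarrow> (1 / dt) *\<^sub>R dX j = 2 *\<^sub>R \<kappa> j"
      using \<open>j \<le> J\<close> by (auto simp: kinematic_residual_def Kfrak_lin_def scaleR_2 algebra_simps)
    with True show ?thesis
      by (simp add: divide_iff mult.commute)
  next
    case False
    then have "kinematic_residual J P0 dt (dX, \<kappa>) j = 0 \<longleftrightarrow> (1 / dt) *\<^sub>R dX j = \<kappa> j"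
      by (auto simp: kinematic_residual_def Kfrak_lin_def algebra_simps)
    with False show ?thesis
      by (simp add: divide_iff)
  qed
qed

lemma scheme_form_nondegenerate:
  assumes "J > 0" and drho_ne: "\<forall>j\<in>{1..J}. drho J W j \<noteq> 0" and "dt > 0"
    and "per \<longrightarrow> P0 = {}"
    and "(dX, \<kappa>) \<in> Vh_d per J D P0 P1 P2 \<times> Vh per J"
    and tested: "\<forall>w \<in> Vh_d per J D P0 P1 P2 \<times> Vh per J. scheme_form J P0 W dt (dX, \<kappa>) w = 0"
  shows "(dX, \<kappa>) = 0"
proof -
  define r where "r = kinematic_residual J P0 dt (dX, \<kappa>)"
  define c where "c j = (if node J j \<in> P0 then 2 * dt else dt)" for j
  have dX: "dX \<in> Vh per J" "dX \<in> Vh_d per J D P0 P1 P2" and \<kappa>: "\<kappa> \<in> Vh per J"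
    using assms(5) by (auto simp: Vh_d_def Vh_d0_def)
  then have "r \<in> Vh per J"
    using kinematic_residual_in_Vh \<open>per \<longrightarrow> P0 = {}\<close> by (simp add: r_def)
  then have "mass J W r r = 0"
    using tested subspace_0[OF subspace_Vh_d]
    by (force simp: scheme_form_def r_def bilinear_rzero[OF bilinear_mass] linear_0[OF linear_ds]
        bilinear_rzero[OF bilinear_l2pc])
  then have dX_eq: "dX j = c j *\<^sub>R \<kappa> j" if "j \<le> J" for j
    using that mass_eq_0_iff[OF \<open>J > 0\<close> drho_ne, of r r] \<open>dt > 0\<close>
      kinematic_residual_eq_0_iff[of dt j J P0 dX \<kappa>] by (simp add: r_def c_def)
  have "c j > 0" for j
    using \<open>dt > 0\<close> by (simp add: c_def)
  then have \<kappa>_dX_nonneg: "\<forall>j\<le>J. 0 \<le> \<kappa> j \<bullet> dX j"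
    using dX_eq by (auto intro!: mult_nonneg_nonneg simp: less_imp_le)
  have "mass J W \<kappa> dX + l2pc J (drho J dX) (ds J W dX) = 0"
    using tested dX(2) subspace_0[OF subspace_Vh]
    by (force simp: scheme_form_def bilinear_rzero[OF bilinear_mass])
  then have "mass J W \<kappa> dX = 0"
    using mass_nonneg[OF \<kappa>_dX_nonneg, of W] l2pc_drho_ds_nonneg[of J dX W] by linarith
  then have \<kappa>_dX_0: "\<kappa> j \<bullet> dX j = 0" if "j \<le> J" for j
    using that mass_eq_0_iff[OF \<open>J > 0\<close> drho_ne \<kappa>_dX_nonneg] by blast
  have "\<kappa> j = 0 \<and> dX j = 0" if "j \<le> J" for j
    using \<kappa>_dX_0[OF that] \<open>c j > 0\<close> by (simp add: dX_eq[OF that])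
  moreover have "\<kappa> j = 0 \<and> dX j = 0" if "j > J" for j
    using that dX(1) \<kappa> by (simp add: Vh_def)
  ultimately have "\<kappa> j = 0 \<and> dX j = 0" for j
    using not_le by blast
  then show "(dX, \<kappa>) = 0"
    by (simp add: fun_eq_iff zero_prod_def)
qed

lemma scheme_iff:
  "(dX \<in> Vh_d per J D P0 P1 P2 \<and> \<kappa> \<in> Vh per J \<and>
      (\<forall>chi\<in>Vh per J.
         mass J Xm (\<lambda>j. (1 / dt) *\<^sub>R ((Xm j + dX j) - Xm j)) chi
       = mass J Xm (\<lambda>j. \<kappa> j - Kfrak per J P0 Xm \<kappa> j) chi) \<and>
      (\<forall>\<eta>\<in>Vh_d per J D P0 P1 P2.
         mass J Xm \<kappa> \<eta>
         + l2pc J (drho J (\<lambda>j. Xm j + dX j))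
                  (\<lambda>j. (1 / norm (drho J Xm j)) *\<^sub>R drho J \<eta> j)
       = - ((\<Sum>p\<in>P1. rho_hat p * (interp J \<eta> p \<bullet> (0, 1)))
           + (\<Sum>p\<in>P2. rho_hat p * (interp J \<eta> p \<bullet> (1, 0))))))
   \<longleftrightarrow> (dX, \<kappa>) \<in> Vh_d per J D P0 P1 P2 \<times> Vh per J \<and>
      (\<forall>w\<in>Vh_d per J D P0 P1 P2 \<times> Vh per J.
         scheme_form J P0 Xm dt (dX, \<kappa>) w = scheme_load per J P0 P1 P2 rho_hat Xm w)"
proof -
  let ?form = "scheme_form J P0 Xm dt (dX, \<kappa>)" and ?load = "scheme_load per J P0 P1 P2 rho_hat Xm"
  have "(\<lambda>j. (1 / dt) *\<^sub>R ((Xm j + dX j) - Xm j))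
      = kinematic_residual J P0 dt (dX, \<kappa>) + (\<lambda>j. \<kappa> j - Kfrak per J P0 Xm \<kappa> j) + Kfrak per J P0 Xm 0"
    unfolding Kfrak_eq_Kfrak_lin_plus[of per J P0 Xm \<kappa>]
    by (simp add: fun_eq_iff kinematic_residual_def)
  then have kinematic:
    "mass J Xm (\<lambda>j. (1 / dt) *\<^sub>R ((Xm j + dX j) - Xm j)) chi
       = mass J Xm (\<lambda>j. \<kappa> j - Kfrak per J P0 Xm \<kappa> j) chi
     \<longleftrightarrow> ?form (0, chi) = ?load (0, chi)" for chi
    by (simp add: scheme_form_def scheme_load_def bilinear_ladd[OF bilinear_mass]
        bilinear_rzero[OF bilinear_mass] bilinear_rzero[OF bilinear_l2pc] linear_0[OF linear_ds]
        interp_0) linarith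
  have "(\<lambda>j. Xm j + dX j) = Xm + dX"
    by (simp add: fun_eq_iff)
  then have curvature:
    "mass J Xm \<kappa> \<eta> + l2pc J (drho J (\<lambda>j. Xm j + dX j)) (\<lambda>j. (1 / norm (drho J Xm j)) *\<^sub>R drho J \<eta> j)
       = - ((\<Sum>p\<in>P1. rho_hat p * (interp J \<eta> p \<bullet> (0, 1)))
           + (\<Sum>p\<in>P2. rho_hat p * (interp J \<eta> p \<bullet> (1, 0))))
     \<longleftrightarrow> ?form (\<eta>, 0) = ?load (\<eta>, 0)" for \<eta>
    by (simp add: scheme_form_def scheme_load_def ds_def linear_add[OF linear_drho]
        bilinear_ladd[OF bilinear_l2pc] bilinear_rzero[OF bilinear_mass]) linarith
  have "linear ?form"
    using bilinear_scheme_form by (simp add: bilinear_def)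
  then show ?thesis
    using linear_eq_on_Times_iff[OF _ linear_scheme_load subspace_Vh_d subspace_Vh]
      kinematic curvature by auto
qed

theorem lemma4p2:
  fixes per :: bool and J :: nat and D P0 P1 P2 :: "real set"
    and rho_hat :: "real \<Rightarrow> real" and Xm :: vfun and dt :: real
  assumes "J \<ge> 3"
    and "D \<union> P0 \<union> P1 \<union> P2 = bdry per"
    and "D \<inter> P0 = {}" and "D \<inter> P1 = {}" and "D \<inter> P2 = {}"
    and "P0 \<inter> P1 = {}" and "P0 \<inter> P2 = {}" and "P1 \<inter> P2 = {}"
    and "\<forall>p\<in>{0, 1}. \<bar>rho_hat p\<bar> \<le> 1"
    and "Xm \<in> Vh_d0 per J P0"
    and "assmA J P0 Xm"
    and "\<forall>j\<le>J. node J j \<notin> P0 \<longrightarrow> omega per J Xm j \<noteq> 0"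
    and "dt > 0"
  shows "\<exists>!z. (case z of (dX, \<kappa>) \<Rightarrow>
      dX \<in> Vh_d per J D P0 P1 P2 \<and> \<kappa> \<in> Vh per J \<and>
      (\<forall>chi\<in>Vh per J.
         mass J Xm (\<lambda>j. (1 / dt) *\<^sub>R ((Xm j + dX j) - Xm j)) chi
       = mass J Xm (\<lambda>j. \<kappa> j - Kfrak per J P0 Xm \<kappa> j) chi) \<and>
      (\<forall>\<eta>\<in>Vh_d per J D P0 P1 P2.
         mass J Xm \<kappa> \<eta>
         + l2pc J (drho J (\<lambda>j. Xm j + dX j))
                  (\<lambda>j. (1 / norm (drho J Xm j)) *\<^sub>R drho J \<eta> j)
       = - ((\<Sum>p\<in>P1. rho_hat p * (interp J \<eta> p \<bullet> (0, 1)))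
           + (\<Sum>p\<in>P2. rho_hat p * (interp J \<eta> p \<bullet> (1, 0))))))"
proof -
  (* Kfrak depends on kappa only at the nodes in P0. *)
  let ?S = "Vh_d per J D P0 P1 P2 \<times> Vh per J"
  have "J > 0"
    using assms(1) by simp
  moreover have "\<forall>j\<in>{1..J}. drho J Xm j \<noteq> 0"
    using assms(11) by (simp add: assmA_def)
  moreover have "per \<longrightarrow> P0 = {}"
    using assms(2) by (auto simp: bdry_def)
  ultimately have "z = 0"
    if "z \<in> ?S" and "\<forall>w\<in>?S. scheme_form J P0 Xm dt z w = 0" for z
    using scheme_form_nondegenerate[OF _ _ \<open>dt > 0\<close>] that by (cases z) blast
  then have "\<exists>!z. z \<in> ?S \<and> (\<forall>w\<in>?S. scheme_form J P0 Xm dt z w = scheme_load per J P0 P1 P2 rho_hat Xm w)"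
    by (intro bilinear_ex1_solution[OF bilinear_scheme_form linear_scheme_load
          subspace_Times[OF subspace_Vh_d subspace_Vh] finite_Un[THEN iffD2] scheme_space_subset_span])
      (auto simp: finite_nodal_basis)
  then show ?thesis
    by (simp only: scheme_iff split_beta prod.collapse)
qed

end
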